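(* In the periodic lock scheduling problem, there exists an optimal schedule $\sigma$ that is periodic with period of length at most $8\Lambda$, where $\Lambda=\operatorname{lcm}(\lambda_1,\dots,\lambda_k)$.
   Context: Periodic lock scheduling problem. Time is discrete, periods $t=1,2,\dots$. There are $k$ vessel streams; stream $i$ has a direction $\delta_i\in\{D,U\}$, an integer periodicity $\lambda_i\ge1$ and an integer offset $1\le\mu_i\le\lambda_i$; $a_i(t)=1$ if $t\equiv\mu_i\pmod{\lambda_i}$ and $0$ otherwise, $a_\delta(t)=\sum_{i:\delta_i=\delta}a_i(t)$. A schedule is a sequence $\sigma=(\sigma(t))_{t\ge1}$ with $\sigma(t)\in\{D,U,W\}$ ($D$: process downstream waiting vessels and switch alignment from downstream to upstream; $U$ symmetrically; $W$: wait at current alignment); the initial orientation is arbitrary; it is feasible if the non-$W$ actions alternate between $D$ and $U$. A sequence is periodic with period $P$ if $\sigma(t)=\sigma(t+P)$ for all $t$. Queue lengths: $n_D(0)=n_U(0)=0$ and for $t\ge1$, $n_\delta(t)=0$ if $\sigma(t)=\delta$ and $n_\delta(t)=n_\delta(t-1)+a_\delta(t)$ otherwise. $C_\sigma(t)=n_D(t)+n_U(t)$ and $C_{\mathrm{avg},\sigma}=\lim_{T\to\infty}\frac1T\sum_{t=1}^TC_\sigma(t)$. A schedule is optimal if it is feasible and minimizes $C_{\mathrm{avg},\sigma}$ over all feasible schedules. *)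

theory Defs
  imports Complex_Main
begin

datatype dir = Down | Upstr

datatype action = Proc dir | Wait

text \<open>A vessel stream is a triple (direction, periodicity lambda, offset mu).\<close>
type_synonym stream = "dir \<times> nat \<times> nat"

definition valid_stream :: "stream \<Rightarrow> bool" where
  "valid_stream s = (case s of (d, l, m) \<Rightarrow> 1 \<le> l \<and> 1 \<le> m \<and> m \<le> l)"

definition arrival :: "stream \<Rightarrow> nat \<Rightarrow> nat" where
  "arrival s t = (case s of (d, l, m) \<Rightarrow> if t mod l = m mod l then 1 else 0)"

definition arrivals :: "stream list \<Rightarrow> dir \<Rightarrow> nat \<Rightarrow> nat" where
  "arrivals S d t = (\<Sum>s\<leftarrow>S. if fst s = d then arrival s t else 0)"

text \<open>Schedules are indexed by periods t = 1,2,...; the value at 0 is irrelevant.\<close>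
type_synonym schedule = "nat \<Rightarrow> action"

definition feasible :: "schedule \<Rightarrow> bool" where
  "feasible \<sigma> = (\<forall>t t' d d'. 1 \<le> t \<and> t < t' \<and> \<sigma> t = Proc d \<and> \<sigma> t' = Proc d'
      \<and> (\<forall>s. t < s \<and> s < t' \<longrightarrow> \<sigma> s = Wait) \<longrightarrow> d \<noteq> d')"

definition periodic_with :: "schedule \<Rightarrow> nat \<Rightarrow> bool" where
  "periodic_with \<sigma> P = (\<forall>t\<ge>1. \<sigma> t = \<sigma> (t + P))"

primrec queue :: "stream list \<Rightarrow> schedule \<Rightarrow> dir \<Rightarrow> nat \<Rightarrow> nat" where
  "queue S \<sigma> d 0 = 0"
| "queue S \<sigma> d (Suc t) = (if \<sigma> (Suc t) = Proc d then 0
                           else queue S \<sigma> d t + arrivals S d (Suc t))"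

definition cost :: "stream list \<Rightarrow> schedule \<Rightarrow> nat \<Rightarrow> nat" where
  "cost S \<sigma> t = queue S \<sigma> Down t + queue S \<sigma> Upstr t"

definition avg_cost_seq :: "stream list \<Rightarrow> schedule \<Rightarrow> nat \<Rightarrow> real" where
  "avg_cost_seq S \<sigma> T = (\<Sum>t=1..T. real (cost S \<sigma> t)) / real T"

definition has_avg_cost :: "stream list \<Rightarrow> schedule \<Rightarrow> real \<Rightarrow> bool" where
  "has_avg_cost S \<sigma> c = (avg_cost_seq S \<sigma> \<longlonglongrightarrow> c)"

definition optimal :: "stream list \<Rightarrow> schedule \<Rightarrow> bool" where
  "optimal S \<sigma> = (feasible \<sigma> \<and> (\<exists>c. has_avg_cost S \<sigma> c \<and>
      (\<forall>\<sigma>' c'. feasible \<sigma>' \<and> has_avg_cost S \<sigma>' c' \<longrightarrow> c \<le> c')))"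

definition Lambda :: "stream list \<Rightarrow> nat" where
  "Lambda S = foldr (\<lambda>s acc. lcm (fst (snd s)) acc) S 1"

end

theory Submission
  imports Defs
begin

text \<open>Serving both sides during a double wait only shortens queues, so it suffices to consider
  feasible schedules without two consecutive waits.  For these the queues in period \<open>t\<close> are
  determined by a state made of \<open>t mod \<Lambda>\<close>, the direction processed last and two wait flags.
  There are \<open>8\<Lambda>\<close> states, and such a schedule is a walk in the transition graph whose cost is
  the sum of the state costs along it.  Cutting out closed subwalks, every walk consists of closed
  walks of length at most \<open>8\<Lambda>\<close> plus at most \<open>8\<Lambda>\<close> further steps, so no schedule has an
  average cost below the least mean cost of such a closed walk; running a minimising closed walk
  forever attains that value with period at most \<open>8\<Lambda>\<close>.\<close>

section \<open>Walks in finite graphs\<close>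

definition walk :: "('a \<Rightarrow> 'a \<Rightarrow> bool) \<Rightarrow> 'a set \<Rightarrow> nat \<Rightarrow> (nat \<Rightarrow> 'a) \<Rightarrow> bool" where
  "walk R V n w \<longleftrightarrow> (\<forall>i<n. w i \<in> V) \<and> (\<forall>i. Suc i < n \<longrightarrow> R (w i) (w (Suc i)))"

definition closed_walk :: "('a \<Rightarrow> 'a \<Rightarrow> bool) \<Rightarrow> 'a set \<Rightarrow> 'a list \<Rightarrow> bool" where
  "closed_walk R V cs \<longleftrightarrow>
     cs \<noteq> [] \<and> set cs \<subseteq> V \<and> (\<forall>i<length cs. R (cs ! i) (cs ! (Suc i mod length cs)))"

definition mean_weight :: "('a \<Rightarrow> real) \<Rightarrow> 'a list \<Rightarrow> real" where
  "mean_weight g cs = (\<Sum>x\<leftarrow>cs. g x) / length cs"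

lemma walk_repeats:
  assumes "finite V" "card V \<le> N" "walk R V n w" "N < n"
  obtains a b where "a < b" "b \<le> N" "w a = w b"
proof -
  have "w ` {..N} \<subseteq> V" using assms(3,4) by (auto simp: walk_def)
  then have "card (w ` {..N}) \<le> card V" by (rule card_mono[OF assms(1)])
  then have "card (w ` {..N}) < card {..N}" using assms(2) by simp
  then obtain x y where "x \<le> N" "y \<le> N" "x \<noteq> y" "w x = w y"
    using pigeonhole unfolding inj_on_def by blast
  then show ?thesis
    using that[of x y] that[of y x] by (cases "x < y") auto
qed

lemma closed_walk_segment:
  assumes w: "walk R V n w" and ab: "a < b" "b < n" "w a = w b"
  shows "closed_walk R V (map (\<lambda>i. w (a + i)) [0..<b - a])" (is "closed_walk R V ?cs")
  unfolding closed_walk_def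
proof (intro conjI allI impI)
  show "?cs \<noteq> []" using ab by simp
  show "set ?cs \<subseteq> V" using w ab by (auto simp: walk_def)
next
  fix i assume "i < length ?cs"
  then have i: "i < b - a" by simp
  have "R (w (a + i)) (w (Suc (a + i)))" using w i ab by (simp add: walk_def)
  moreover have "Suc i mod (b - a) = (if Suc i = b - a then 0 else Suc i)" using i by simp
  moreover have "Suc i = b - a \<Longrightarrow> Suc (a + i) = b" using ab by linarith
  ultimately show "R (?cs ! i) (?cs ! (Suc i mod length ?cs))"
    using i ab by auto
qed

lemma walk_cut_segment:
  assumes w: "walk R V n w" and ab: "a < b" "b < n" "w a = w b"
  shows "walk R V (n - (b - a)) (\<lambda>i. if i < a then w i else w (i + (b - a)))"
  unfolding walk_def
proof (intro conjI allI impI)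
  fix i assume "i < n - (b - a)"
  then show "(if i < a then w i else w (i + (b - a))) \<in> V" using w ab by (auto simp: walk_def)
next
  fix i assume i: "Suc i < n - (b - a)"
  consider "Suc i < a" | "Suc i = a" | "a \<le> i" by linarith
  then show "R (if i < a then w i else w (i + (b - a))) (if Suc i < a then w (Suc i) else w (Suc i + (b - a)))"
  proof cases
    case 1
    then show ?thesis using w ab by (simp add: walk_def)
  next
    case 2
    then have "R (w i) (w a)" using w ab by (metis walk_def less_trans)
    then show ?thesis using 2 ab by simp
  next
    case 3
    then show ?thesis using w i by (simp add: walk_def)
  qed
qed

lemma sum_cut_segment:
  fixes f :: "nat \<Rightarrow> 'b::comm_monoid_add"
  assumes "a \<le> b" "b \<le> n"
  shows "(\<Sum>i<n. f i) = (\<Sum>i<b - a. f (a + i)) + (\<Sum>i<n - (b - a). f (if i < a then i else i + (b - a)))"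
proof -
  let ?h = "\<lambda>i. f (if i < a then i else i + (b - a))"
  have "sum f {0..<n} = sum f {0..<a} + sum f {a..<b} + sum f {b..<n}"
    using sum.atLeastLessThan_concat[of 0 a b f] sum.atLeastLessThan_concat[of 0 b n f] assms by simp
  moreover have "sum f {a..<b} = (\<Sum>i\<in>{0..<b - a}. f (a + i))"
    using sum.shift_bounds_nat_ivl[of f 0 a "b - a"] assms by (simp add: add.commute)
  moreover have "sum ?h {0..<n - (b - a)} = sum ?h {0..<a} + sum ?h {a..<n - (b - a)}"
    using sum.atLeastLessThan_concat[of 0 a "n - (b - a)" ?h] assms by simp
  moreover have "sum ?h {0..<a} = sum f {0..<a}" by simp
  moreover have "sum ?h {a..<n - (b - a)} = sum f {b..<n}"
    using sum.shift_bounds_nat_ivl[of f a "b - a" "n - (b - a)"] assms by simp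
  ultimately show ?thesis by (simp add: atLeast0LessThan ac_simps)
qed

text \<open>Cutting closed subwalks of length at most \<open>N\<close> out of a long walk leaves at most \<open>N\<close> steps.\<close>
lemma walk_weight_ge:
  fixes g :: "'a \<Rightarrow> real" and c :: real
  assumes V: "finite V" "card V \<le> N" and g: "\<And>x. 0 \<le> g x" and c: "0 \<le> c"
    and cycles: "\<And>cs. closed_walk R V cs \<Longrightarrow> length cs \<le> N \<Longrightarrow> c * length cs \<le> (\<Sum>x\<leftarrow>cs. g x)"
  shows "walk R V n w \<Longrightarrow> c * (real n - real N) \<le> (\<Sum>i<n. g (w i))"
proof (induction n arbitrary: w rule: less_induct)
  case (less n)
  show ?case
  proof (cases "n \<le> N")
    case True
    then have "c * (real n - real N) \<le> 0" using c by (simp add: mult_nonneg_nonpos)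
    also have "0 \<le> (\<Sum>i<n. g (w i))" using g by (simp add: sum_nonneg)
    finally show ?thesis .
  next
    case False
    then obtain a b where ab: "a < b" "b \<le> N" "w a = w b"
      using walk_repeats[OF V less.prems] by auto
    have b: "b < n" using ab False by simp
    let ?d = "b - a" and ?w = "\<lambda>i. if i < a then w i else w (i + (b - a))"
    have "c * ?d \<le> (\<Sum>i<?d. g (w (a + i)))"
      using cycles[OF closed_walk_segment[OF less.prems ab(1) b ab(3)]] ab
      by (simp add: sum_list_sum_nth atLeast0LessThan)
    moreover have "c * (real (n - ?d) - real N) \<le> (\<Sum>i<n - ?d. g (?w i))"
      using less.IH[OF _ walk_cut_segment[OF less.prems ab(1) b ab(3)]] ab b by simp
    moreover have "(\<Sum>i<n. g (w i)) = (\<Sum>i<?d. g (w (a + i))) + (\<Sum>i<n - ?d. g (?w i))"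
      using sum_cut_segment[of a b n "\<lambda>i. g (w i)"] ab b by (simp add: if_distrib)
    moreover have "c * (real n - real N) = c * ?d + c * (real (n - ?d) - real N)"
      using ab b by (simp add: of_nat_diff algebra_simps)
    ultimately show ?thesis by linarith
  qed
qed

lemma exists_min_mean_closed_walk:
  fixes g :: "'a \<Rightarrow> real"
  assumes "finite V" "closed_walk R V cs\<^sub>0" "length cs\<^sub>0 \<le> N"
  obtains cs where "closed_walk R V cs" "length cs \<le> N"
    "\<And>cs'. closed_walk R V cs' \<Longrightarrow> length cs' \<le> N \<Longrightarrow> mean_weight g cs * length cs' \<le> (\<Sum>x\<leftarrow>cs'. g x)"
proof -
  let ?C = "{cs. closed_walk R V cs \<and> length cs \<le> N}"
  have fin: "finite ?C"
    using finite_lists_length_le[OF assms(1), of N] by (rule finite_subset[rotated]) (auto simp: closed_walk_def)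
  have ne: "?C \<noteq> {}" using assms by blast
  define cs where "cs = arg_min_on (mean_weight g) ?C"
  have cs: "cs \<in> ?C" unfolding cs_def by (rule arg_min_if_finite(1)[OF fin ne])
  have min: "mean_weight g cs \<le> mean_weight g cs'" if "cs' \<in> ?C" for cs'
    unfolding cs_def by (rule arg_min_least[OF fin ne that])
  show ?thesis
  proof (rule that)
    show "closed_walk R V cs" "length cs \<le> N" using cs by auto
  next
    fix cs' assume "closed_walk R V cs'" "length cs' \<le> N"
    then have "mean_weight g cs \<le> mean_weight g cs'" "0 < length cs'"
      using min by (auto simp: closed_walk_def)
    then show "mean_weight g cs * length cs' \<le> (\<Sum>x\<leftarrow>cs'. g x)"
      by (simp add: mean_weight_def pos_le_divide_eq)
  qed
qed

lemma mean_weight_nonneg: "(\<And>x. 0 \<le> g x) \<Longrightarrow> 0 \<le> mean_weight g cs"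
  unfolding mean_weight_def by (intro divide_nonneg_nonneg sum_list_nonneg) auto

section \<open>Averages of eventually periodic sequences\<close>

lemma bounded_if_eventually_periodic:
  fixes h :: "nat \<Rightarrow> real"
  assumes m: "0 < m" and per: "\<And>t. t\<^sub>0 \<le> t \<Longrightarrow> h (t + m) = h t"
  obtains B where "\<And>t. \<bar>h t\<bar> \<le> B"
proof
  show "\<bar>h t\<bar> \<le> Max ((\<lambda>t. \<bar>h t\<bar>) ` {..t\<^sub>0 + m})" for t
  proof (induction t rule: less_induct)
    case (less t)
    show ?case
    proof (cases "t \<le> t\<^sub>0 + m")
      case True
      then show ?thesis by (intro Max_ge) auto
    next
      case False
      then have "h t = h (t - m)" using per[of "t - m"] by simp
      then show ?thesis using less.IH[of "t - m"] m False by simp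
    qed
  qed
qed

lemma bounded_divide_real_tendsto_0:
  fixes h :: "nat \<Rightarrow> real"
  assumes "\<And>t. \<bar>h t\<bar> \<le> B"
  shows "(\<lambda>T. h T / real T) \<longlonglongrightarrow> 0"
proof (rule tendsto_sandwich[of "\<lambda>T. - B / real T" _ _ "\<lambda>T. B / real T"])
  have "- B \<le> h T" "h T \<le> B" for T
    using assms[of T] by (auto simp: abs_le_iff)
  then show "\<forall>\<^sub>F T in sequentially. - B / real T \<le> h T / real T"
    and "\<forall>\<^sub>F T in sequentially. h T / real T \<le> B / real T"
    by (intro always_eventually allI divide_right_mono; simp)+
  show "(\<lambda>T. - B / real T) \<longlonglongrightarrow> 0" using lim_const_over_n[of "- B"] by simp
  show "(\<lambda>T. B / real T) \<longlonglongrightarrow> 0" by (rule lim_const_over_n)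
qed

lemma cesaro_eventually_periodic:
  fixes f :: "nat \<Rightarrow> real"
  assumes m: "0 < m" and per: "\<And>t. t\<^sub>0 \<le> t \<Longrightarrow> f (t + m) = f t"
  shows "(\<lambda>T. (\<Sum>t=1..T. f t) / real T) \<longlonglongrightarrow> (\<Sum>t\<in>{t\<^sub>0..<t\<^sub>0 + m}. f t) / real m"
proof -
  define c where "c = (\<Sum>t\<in>{t\<^sub>0..<t\<^sub>0 + m}. f t) / real m"
  have window: "(\<Sum>t\<in>{k..<k + m}. f t) = c * m" if "t\<^sub>0 \<le> k" for k
    using that
  proof (induction k rule: nat_induct_at_least)
    case base
    then show ?case using m by (simp add: c_def)
  next
    case (Suc k)
    have "(\<Sum>t\<in>{k..<k + m}. f t) + f (k + m) = (\<Sum>t\<in>{k..<Suc (k + m)}. f t)"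
      by simp
    also have "\<dots> = f k + (\<Sum>t\<in>{Suc k..<Suc k + m}. f t)"
      using sum.atLeast_Suc_lessThan[of k "Suc (k + m)" f] by simp
    finally have "(\<Sum>t\<in>{k..<k + m}. f t) + f (k + m) = f k + (\<Sum>t\<in>{Suc k..<Suc k + m}. f t)" .
    then show ?case using Suc.IH per[OF Suc.hyps] by linarith
  qed
  define h where "h T = (\<Sum>t=1..T. f t) - c * T" for T
  have "h (T + m) = h T" if "t\<^sub>0 \<le> T" for T
  proof -
    have "(\<Sum>t=1..T + m. f t) = (\<Sum>t=1..T. f t) + (\<Sum>t=T + 1..T + m. f t)"
      by (rule sum.ub_add_nat) simp
    also have "{T + 1..T + m} = {Suc T..<Suc T + m}" by auto
    finally have "(\<Sum>t=1..T + m. f t) = (\<Sum>t=1..T. f t) + (\<Sum>t\<in>{Suc T..<Suc T + m}. f t)" .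
    then show ?thesis using window[of "Suc T"] that by (simp add: h_def algebra_simps)
  qed
  then obtain B where "\<And>T. \<bar>h T\<bar> \<le> B" using bounded_if_eventually_periodic m by blast
  then have "(\<lambda>T. c + h T / real T) \<longlonglongrightarrow> c + 0"
    by (intro tendsto_add tendsto_const bounded_divide_real_tendsto_0)
  moreover have "\<forall>\<^sub>F T in sequentially. c + h T / real T = (\<Sum>t=1..T. f t) / real T"
    unfolding eventually_sequentially by (rule exI[of _ 1]) (auto simp: h_def field_simps)
  ultimately show ?thesis unfolding c_def by (simp add: Lim_transform_eventually)
qed

lemma average_limit_ge:
  fixes F :: "nat \<Rightarrow> real"
  assumes lim: "(\<lambda>T. F T / real T) \<longlonglongrightarrow> c'" and bound: "\<And>T. T\<^sub>0 \<le> T \<Longrightarrow> c * (real T - K) \<le> F T"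
  shows "c \<le> c'"
proof (rule LIMSEQ_le[OF _ lim])
  have "(\<lambda>T. c - c * K / real T) \<longlonglongrightarrow> c - 0"
    by (intro tendsto_diff tendsto_const lim_const_over_n)
  moreover have "\<forall>\<^sub>F T in sequentially. c - c * K / real T = c * (real T - K) / real T"
    unfolding eventually_sequentially by (rule exI[of _ 1]) (auto simp: field_simps)
  ultimately show "(\<lambda>T. c * (real T - K) / real T) \<longlonglongrightarrow> c"
    by (simp add: Lim_transform_eventually)
  show "\<exists>N. \<forall>T\<ge>N. c * (real T - K) / real T \<le> F T / real T"
    using bound by (intro exI[of _ T\<^sub>0] allI impI divide_right_mono) simp_all
qed

section \<open>Feasibility and queues\<close>

fun opp :: "dir \<Rightarrow> dir" where
  "opp Down = Upstr"
| "opp Upstr = Down"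

lemma opp_eq_iff: "opp a = b \<longleftrightarrow> a \<noteq> b"
  by (cases a; cases b) auto

lemma eq_opp_iff: "a = opp b \<longleftrightarrow> a \<noteq> b"
  by (cases a; cases b) auto

lemma UNIV_dir: "(UNIV :: dir set) = {Down, Upstr}"
  using dir.exhaust by auto

fun proc_dir :: "action \<Rightarrow> dir" where
  "proc_dir (Proc d) = d"
| "proc_dir Wait = Down"

lemma Lambda_Cons: "Lambda (s # S) = lcm (fst (snd s)) (Lambda S)"
  by (simp add: Lambda_def)

lemma dvd_Lambda: "s \<in> set S \<Longrightarrow> fst (snd s) dvd Lambda S"
  by (induction S) (auto simp: Lambda_Cons intro: dvd_trans[OF _ dvd_lcm2])

lemma Lambda_pos: "\<forall>s\<in>set S. valid_stream s \<Longrightarrow> 0 < Lambda S"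
  by (induction S) (auto simp: Lambda_Cons Lambda_def valid_stream_def lcm_pos_nat split: prod.splits)

lemma arrivals_cong_mod_Lambda:
  assumes "x mod Lambda S = y mod Lambda S"
  shows "arrivals S d x = arrivals S d y"
  unfolding arrivals_def
proof (intro arg_cong[where f = sum_list] map_cong refl)
  fix s assume s: "s \<in> set S"
  obtain e l m where s_eq: "s = (e, l, m)" by (cases s) auto
  have "x mod l = y mod l"
    using assms dvd_Lambda[OF s] s_eq by (metis mod_mod_cancel snd_conv fst_conv)
  then show "(if fst s = d then arrival s x else 0) = (if fst s = d then arrival s y else 0)"
    by (simp add: s_eq arrival_def)
qed

text \<open>The arrivals \<open>i\<close> periods before a period of phase \<open>r\<close>; the offset \<open>3 * Lambda S\<close>
  keeps the subtraction from truncating.\<close>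
definition phase_arrivals :: "stream list \<Rightarrow> dir \<Rightarrow> nat \<Rightarrow> nat \<Rightarrow> nat" where
  "phase_arrivals S d r i = arrivals S d (r + 3 * Lambda S - i)"

lemma phase_arrivals_mod_Lambda:
  assumes "0 < Lambda S" "i \<le> 2" "i \<le> t"
  shows "phase_arrivals S d (t mod Lambda S) i = arrivals S d (t - i)"
proof -
  let ?L = "Lambda S"
  have "(t mod ?L + 3 * ?L - i) + t div ?L * ?L = (t - i) + 3 * ?L"
    using assms div_mult_mod_eq[of t ?L] by linarith
  then have "(t mod ?L + 3 * ?L - i) mod ?L = (t - i) mod ?L"
    by (metis mod_mult_self1 mod_mult_self2)
  then show ?thesis
    unfolding phase_arrivals_def by (rule arrivals_cong_mod_Lambda)
qed

definition dominates :: "schedule \<Rightarrow> schedule \<Rightarrow> bool" where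
  "dominates \<sigma>' \<sigma> \<longleftrightarrow> (\<forall>t d. \<sigma> t = Proc d \<longrightarrow> \<sigma>' t = Proc d)"

lemma queue_le_if_dominates: "dominates \<sigma>' \<sigma> \<Longrightarrow> queue S \<sigma>' d t \<le> queue S \<sigma> d t"
  unfolding dominates_def by (induction t) auto

lemma cost_le_if_dominates: "dominates \<sigma>' \<sigma> \<Longrightarrow> cost S \<sigma>' t \<le> cost S \<sigma> t"
  unfolding cost_def by (intro add_mono queue_le_if_dominates)

lemma feasible_Proc_Proc:
  "feasible \<sigma> \<Longrightarrow> 1 \<le> t \<Longrightarrow> \<sigma> t = Proc a \<Longrightarrow> \<sigma> (Suc t) = Proc b \<Longrightarrow> a \<noteq> b"
  unfolding feasible_def by (metis Suc_lessD less_Suc_eq not_less_eq lessI)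

lemma feasible_Proc_Wait_Proc:
  assumes "feasible \<sigma>" "1 \<le> t" "\<sigma> t = Proc a" "\<sigma> (Suc t) = Wait" "\<sigma> (Suc (Suc t)) = Proc b"
  shows "a \<noteq> b"
proof -
  have "\<forall>x. t < x \<and> x < Suc (Suc t) \<longrightarrow> \<sigma> x = Wait"
    using assms(4) by (metis less_Suc_eq not_less_eq)
  then show ?thesis
    using assms unfolding feasible_def by (metis lessI less_SucI)
qed

definition no_double_wait :: "schedule \<Rightarrow> nat \<Rightarrow> nat \<Rightarrow> bool" where
  "no_double_wait \<sigma> a b \<longleftrightarrow> (\<forall>t. a \<le> t \<and> t < b \<longrightarrow> \<sigma> t \<noteq> Wait \<or> \<sigma> (Suc t) \<noteq> Wait)"

lemma no_double_wait_mono: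
  "no_double_wait \<sigma> a b \<Longrightarrow> a \<le> a' \<Longrightarrow> b' \<le> b \<Longrightarrow> no_double_wait \<sigma> a' b'"
  unfolding no_double_wait_def by auto

lemma feasible_if_alternating_locally:
  assumes "\<And>t. \<sigma> t \<noteq> Wait \<or> \<sigma> (Suc t) \<noteq> Wait"
    and "\<And>t a b. \<sigma> t = Proc a \<Longrightarrow> \<sigma> (Suc t) = Proc b \<Longrightarrow> a \<noteq> b"
    and "\<And>t a b. \<sigma> t = Proc a \<Longrightarrow> \<sigma> (Suc t) = Wait \<Longrightarrow> \<sigma> (Suc (Suc t)) = Proc b \<Longrightarrow> a \<noteq> b"
  shows "feasible \<sigma>"
  unfolding feasible_def
proof (intro allI impI)
  fix t t' d d'
  assume a: "1 \<le> t \<and> t < t' \<and> \<sigma> t = Proc d \<and> \<sigma> t' = Proc d' \<and> (\<forall>s. t < s \<and> s < t' \<longrightarrow> \<sigma> s = Wait)"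
  consider "t' = Suc t" | "t' = Suc (Suc t)" | "Suc (Suc t) < t'"
    using a by linarith
  then show "d \<noteq> d'"
  proof cases
    case 1
    then show ?thesis using assms(2) a by blast
  next
    case 2
    then show ?thesis using assms(3) a by auto
  next
    case 3
    then show ?thesis using assms(1)[of "Suc t"] a by auto
  qed
qed

lemma feasible_fill_first_wait:
  assumes F: "feasible \<sigma>" and W: "\<sigma> 1 = Wait"
  shows "feasible (\<sigma>(1 := Proc (opp (proc_dir (\<sigma> (LEAST s. 1 \<le> s \<and> \<sigma> s \<noteq> Wait))))))"
    (is "feasible ?\<sigma>")
  unfolding feasible_def
proof (intro allI impI)
  fix s s' a b
  assume "1 \<le> s \<and> s < s' \<and> ?\<sigma> s = Proc a \<and> ?\<sigma> s' = Proc b \<and> (\<forall>x. s < x \<and> x < s' \<longrightarrow> ?\<sigma> x = Wait)"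
  then have s: "1 \<le> s" "s < s'" "?\<sigma> s = Proc a" "?\<sigma> s' = Proc b"
    and between: "\<And>x. s < x \<Longrightarrow> x < s' \<Longrightarrow> ?\<sigma> x = Wait" by auto
  show "a \<noteq> b"
  proof (cases "s = 1")
    case True
    have "(LEAST s. 1 \<le> s \<and> \<sigma> s \<noteq> Wait) = s'"
    proof (rule Least_equality)
      show "1 \<le> s' \<and> \<sigma> s' \<noteq> Wait" using s True by auto
      show "s' \<le> y" if "1 \<le> y \<and> \<sigma> y \<noteq> Wait" for y
        using that between[of y] W True by (cases "y = 1") (auto simp: not_le[symmetric])
    qed
    then show ?thesis using s True by (auto simp: opp_eq_iff)
  next
    case False
    then have "\<sigma> s = Proc a" "\<sigma> s' = Proc b" "\<forall>x. s < x \<and> x < s' \<longrightarrow> \<sigma> x = Wait"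
      using s between by auto
    then show ?thesis using F s unfolding feasible_def by blast
  qed
qed

lemma feasible_fill_double_wait:
  assumes F: "feasible \<sigma>" and t: "2 \<le> t"
    and e: "\<sigma> (t - 1) = Proc e" and W: "\<sigma> t = Wait" "\<sigma> (Suc t) = Wait"
  shows "feasible (\<sigma>(t := Proc (opp e), Suc t := Proc e))" (is "feasible ?\<sigma>")
  unfolding feasible_def
proof (intro allI impI)
  fix s s' a b
  assume "1 \<le> s \<and> s < s' \<and> ?\<sigma> s = Proc a \<and> ?\<sigma> s' = Proc b \<and> (\<forall>x. s < x \<and> x < s' \<longrightarrow> ?\<sigma> x = Wait)"
  then have s: "1 \<le> s" "s < s'" "?\<sigma> s = Proc a" "?\<sigma> s' = Proc b"
    and between: "\<And>x. s < x \<Longrightarrow> x < s' \<Longrightarrow> ?\<sigma> x = Wait" by auto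
  have outside: "x \<le> s \<or> s' \<le> x" if "?\<sigma> x \<noteq> Wait" for x
    using that between not_le by metis
  consider "s' < t \<or> Suc t < s" | "s' = t" | "s' = Suc t" | "s = Suc t" "Suc t < s'"
    using outside[of t] outside[of "Suc t"] by fastforce
  then show "a \<noteq> b"
  proof cases
    case 1
    then have "\<sigma> s = Proc a" "\<sigma> s' = Proc b" "\<forall>x. s < x \<and> x < s' \<longrightarrow> \<sigma> x = Wait"
      using s between by auto
    then show ?thesis using F s unfolding feasible_def by blast
  next
    case 2
    have prev: "?\<sigma> (t - 1) = Proc e" using t e by auto
    then have "s = t - 1" using outside[of "t - 1"] s 2 by fastforce
    then show ?thesis using s 2 prev by (auto simp: opp_eq_iff)
  next
    case 3
    then have "s = t" using outside[of t] s by auto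
    then show ?thesis using s 3 by (auto simp: opp_eq_iff)
  next
    case 4
    have waits: "\<sigma> x = Wait" if "t - 1 < x" "x < s'" for x
    proof (cases "x \<le> Suc t")
      case True
      then have "x = t \<or> x = Suc t" using that by linarith
      then show ?thesis using W by auto
    next
      case False
      then show ?thesis using that between[of x] 4 by auto
    qed
    moreover have "\<sigma> s' = Proc b" using s 4 by auto
    moreover have "1 \<le> t - 1" "t - 1 < s'" using t 4 by auto
    ultimately have "e \<noteq> b"
      using F e unfolding feasible_def by blast
    then show ?thesis using s 4 by simp
  qed
qed

lemma exists_dominating_first_nonwait:
  assumes "feasible \<sigma>"
  obtains \<sigma>' where "feasible \<sigma>'" "dominates \<sigma>' \<sigma>" "\<sigma>' 1 \<noteq> Wait"
proof (cases "\<sigma> 1 = Wait")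
  case True
  let ?\<sigma> = "\<sigma>(1 := Proc (opp (proc_dir (\<sigma> (LEAST s. 1 \<le> s \<and> \<sigma> s \<noteq> Wait)))))"
  have "dominates ?\<sigma> \<sigma>"
    unfolding dominates_def using True by (metis action.distinct(1) fun_upd_other)
  then show ?thesis using that feasible_fill_first_wait[OF assms True] by (metis action.distinct(1) fun_upd_same)
next
  case False
  then show ?thesis using that assms unfolding dominates_def by blast
qed

lemma exists_dominating_no_double_wait:
  assumes F: "feasible \<sigma>"
  shows "\<exists>\<sigma>'. feasible \<sigma>' \<and> dominates \<sigma>' \<sigma> \<and> \<sigma>' 1 \<noteq> Wait \<and> no_double_wait \<sigma>' 1 T"
proof (induction T)
  case 0
  obtain \<sigma>' where "feasible \<sigma>'" "dominates \<sigma>' \<sigma>" "\<sigma>' 1 \<noteq> Wait"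
    using exists_dominating_first_nonwait[OF F] .
  moreover have "no_double_wait \<sigma>' 1 0" by (simp add: no_double_wait_def)
  ultimately show ?case by blast
next
  case (Suc T)
  then obtain \<sigma>' where \<sigma>': "feasible \<sigma>'" "dominates \<sigma>' \<sigma>" "\<sigma>' 1 \<noteq> Wait"
    and nw: "no_double_wait \<sigma>' 1 T" by blast
  show ?case
  proof (cases "1 \<le> T \<and> \<sigma>' T = Wait \<and> \<sigma>' (Suc T) = Wait")
    case False
    then have "no_double_wait \<sigma>' 1 (Suc T)"
      using nw by (auto simp: no_double_wait_def less_Suc_eq)
    then show ?thesis using \<sigma>' by blast
  next
    case True
    then have T: "2 \<le> T" using \<sigma>'(3) by (cases "T = 1") auto
    then have "\<sigma>' (T - 1) \<noteq> Wait \<or> \<sigma>' (Suc (T - 1)) \<noteq> Wait"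
      using nw[unfolded no_double_wait_def, rule_format, of "T - 1"] by simp
    then have "\<sigma>' (T - 1) \<noteq> Wait" using True T by simp
    then obtain e where e: "\<sigma>' (T - 1) = Proc e" by (cases "\<sigma>' (T - 1)") auto
    let ?\<sigma> = "\<sigma>'(T := Proc (opp e), Suc T := Proc e)"
    have "feasible ?\<sigma>" using feasible_fill_double_wait[OF \<sigma>'(1) T e] True by blast
    moreover have "dominates ?\<sigma> \<sigma>" using \<sigma>'(2) True by (auto simp: dominates_def)
    moreover have "?\<sigma> 1 \<noteq> Wait" using \<sigma>'(3) by simp
    moreover have "no_double_wait ?\<sigma> 1 (Suc T)"
      using nw unfolding no_double_wait_def by (auto simp: less_Suc_eq)
    ultimately show ?thesis by blast
  qed
qed

section \<open>A finite state abstraction\<close>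

type_synonym lock_state = "nat \<times> dir \<times> bool \<times> bool"

text \<open>The state in period \<open>t\<close> records the phase \<open>t mod L\<close>, the direction \<open>e\<close> of the last
  processing up to \<open>t\<close>, whether period \<open>t\<close> waits, and whether the period before that last
  processing waited.  In a schedule without two consecutive waits it determines both queues.\<close>
definition state_at :: "nat \<Rightarrow> schedule \<Rightarrow> nat \<Rightarrow> lock_state" where
  "state_at L \<sigma> t =
     (if \<sigma> t = Wait then (t mod L, proc_dir (\<sigma> (t - 1)), True, \<sigma> (t - 2) = Wait)
      else (t mod L, proc_dir (\<sigma> t), False, \<sigma> (t - 1) = Wait))"

fun state_queue :: "stream list \<Rightarrow> lock_state \<Rightarrow> dir \<Rightarrow> nat" where
  "state_queue S (r, e, False, j) d =
     (if d = e then 0 else phase_arrivals S d r 0 + (if j then phase_arrivals S d r 1 else 0))"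
| "state_queue S (r, e, True, j) d =
     (if d = e then phase_arrivals S d r 0
      else phase_arrivals S d r 0 + phase_arrivals S d r 1 + (if j then phase_arrivals S d r 2 else 0))"

definition state_cost :: "stream list \<Rightarrow> lock_state \<Rightarrow> nat" where
  "state_cost S x = state_queue S x Down + state_queue S x Upstr"

text \<open>A step either processes the direction opposite to the last one, or inserts a single wait
  after a processing.\<close>
fun state_step :: "nat \<Rightarrow> lock_state \<Rightarrow> lock_state \<Rightarrow> bool" where
  "state_step L (r, e, k, j) (r', e', k', j') \<longleftrightarrow>
     r' = Suc r mod L \<and> (\<not> k' \<and> e' \<noteq> e \<and> j' = k \<or> \<not> k \<and> k' \<and> e' = e \<and> j' = j)"

lemma queue_eq_state_queue:
  assumes L: "0 < Lambda S" and F: "feasible \<sigma>" and t: "4 \<le> t"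
    and nw: "no_double_wait \<sigma> (t - 3) t"
  shows "queue S \<sigma> d t = state_queue S (state_at (Lambda S) \<sigma> t) d"
proof -
  have "t = Suc (Suc (Suc (Suc (t - 4))))" using t by simp
  then obtain n where n: "t = Suc (Suc (Suc (Suc n)))" by blast
  let ?s1 = "Suc n" and ?s2 = "Suc (Suc n)" and ?s3 = "Suc (Suc (Suc n))"
  let ?t = "Suc ?s3"
  have nw1: "\<sigma> ?s1 \<noteq> Wait \<or> \<sigma> ?s2 \<noteq> Wait"
    and nw2: "\<sigma> ?s2 \<noteq> Wait \<or> \<sigma> ?s3 \<noteq> Wait"
    and nw3: "\<sigma> ?s3 \<noteq> Wait \<or> \<sigma> ?t \<noteq> Wait"
    using nw n unfolding no_double_wait_def by auto
  have a0: "phase_arrivals S e (?t mod Lambda S) 0 = arrivals S e ?t"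
    and a1: "phase_arrivals S e (?t mod Lambda S) 1 = arrivals S e ?s3"
    and a2: "phase_arrivals S e (?t mod Lambda S) 2 = arrivals S e ?s2" for e
    using phase_arrivals_mod_Lambda[OF L, of _ ?t] by simp_all
  note adj = feasible_Proc_Proc[OF F] and gap = feasible_Proc_Wait_Proc[OF F]
  have d: "d = e \<or> d = opp e" for e
    by (simp add: eq_opp_iff)
  have "queue S \<sigma> d ?t = state_queue S (state_at (Lambda S) \<sigma> ?t) d"
  proof (cases "\<sigma> ?t")
    case (Proc e)
    then have st: "state_at (Lambda S) \<sigma> ?t = (?t mod Lambda S, e, False, \<sigma> ?s3 = Wait)"
      by (simp add: state_at_def)
    show ?thesis
    proof (cases "\<sigma> ?s3")
      case (Proc e')
      then have "e' = opp e" using adj[of ?s3 e' e] \<open>\<sigma> ?t = Proc e\<close> by (simp add: eq_opp_iff)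
      then show ?thesis using d[of e] st Proc \<open>\<sigma> ?t = Proc e\<close> a0 by auto
    next
      case Wait
      then obtain e' where e': "\<sigma> ?s2 = Proc e'" using nw2 by (cases "\<sigma> ?s2") auto
      then have "e' = opp e" using gap[of ?s2 e' e] Wait \<open>\<sigma> ?t = Proc e\<close> by (simp add: eq_opp_iff)
      then show ?thesis using d[of e] st Wait e' \<open>\<sigma> ?t = Proc e\<close> a0 a1 by auto
    qed
  next
    case Wait
    then obtain e where e: "\<sigma> ?s3 = Proc e" using nw3 by (cases "\<sigma> ?s3") auto
    then have st: "state_at (Lambda S) \<sigma> ?t = (?t mod Lambda S, e, True, \<sigma> ?s2 = Wait)"
      using Wait by (simp add: state_at_def)
    show ?thesis
    proof (cases "\<sigma> ?s2")
      case (Proc e')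
      then have "e' = opp e" using adj[of ?s2 e' e] e by (simp add: eq_opp_iff)
      then show ?thesis using d[of e] st Proc Wait e a0 a1 by auto
    next
      case W2: Wait
      then obtain e' where e': "\<sigma> ?s1 = Proc e'" using nw1 by (cases "\<sigma> ?s1") auto
      then have "e' = opp e" using gap[of ?s1 e' e] W2 e by (simp add: eq_opp_iff)
      then show ?thesis using d[of e] st W2 Wait e e' a0 a1 a2 by auto
    qed
  qed
  then show ?thesis unfolding n .
qed

lemma cost_eq_state_cost:
  assumes "0 < Lambda S" "feasible \<sigma>" "4 \<le> t" "no_double_wait \<sigma> (t - 3) t"
  shows "cost S \<sigma> t = state_cost S (state_at (Lambda S) \<sigma> t)"
  using queue_eq_state_queue[OF assms] by (simp add: cost_def state_cost_def)

lemma state_step_state_at: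
  assumes F: "feasible \<sigma>" and t: "2 \<le> t" and nw: "no_double_wait \<sigma> (t - 1) (Suc t)"
  shows "state_step L (state_at L \<sigma> t) (state_at L \<sigma> (Suc t))"
proof -
  have "\<sigma> (t - 1) \<noteq> Wait \<or> \<sigma> (Suc (t - 1)) \<noteq> Wait" and nw2: "\<sigma> t \<noteq> Wait \<or> \<sigma> (Suc t) \<noteq> Wait"
    using nw t unfolding no_double_wait_def by auto
  then have nw1: "\<sigma> (t - 1) \<noteq> Wait \<or> \<sigma> t \<noteq> Wait" using t by simp
  have r: "Suc t mod L = Suc (t mod L) mod L" by (simp add: mod_Suc_eq)
  show ?thesis
  proof (cases "\<sigma> (Suc t)")
    case (Proc b)
    show ?thesis
    proof (cases "\<sigma> t")
      case (Proc a)
      then have "a \<noteq> b" using feasible_Proc_Proc[OF F, of t] \<open>\<sigma> (Suc t) = Proc b\<close> t by simp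
      then show ?thesis using Proc \<open>\<sigma> (Suc t) = Proc b\<close> r by (simp add: state_at_def)
    next
      case Wait
      then obtain a where a: "\<sigma> (t - 1) = Proc a" using nw1 by (cases "\<sigma> (t - 1)") auto
      then have "a \<noteq> b"
        using feasible_Proc_Wait_Proc[OF F, of "t - 1"] Wait \<open>\<sigma> (Suc t) = Proc b\<close> t by (simp add: Suc_diff_1)
      then show ?thesis using Wait a \<open>\<sigma> (Suc t) = Proc b\<close> r by (simp add: state_at_def)
    qed
  next
    case Wait
    then obtain a where "\<sigma> t = Proc a" using nw2 by (cases "\<sigma> t") auto
    then show ?thesis using Wait r by (simp add: state_at_def)
  qed
qed

fun state_action :: "lock_state \<Rightarrow> action" where
  "state_action (r, e, k, j) = (if k then Wait else Proc e)"

definition states :: "nat \<Rightarrow> lock_state set" where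
  "states L = {0..<L} \<times> UNIV"

lemma states_eq: "states L = {0..<L} \<times> {Down, Upstr} \<times> UNIV \<times> UNIV"
  unfolding states_def UNIV_dir[symmetric] by simp

lemma finite_states: "finite (states L)"
  unfolding states_eq by simp

lemma card_states: "card (states L) = 8 * L"
  unfolding states_eq card_cartesian_product by simp

lemma state_at_in_states: "0 < L \<Longrightarrow> state_at L \<sigma> t \<in> states L"
  by (simp add: state_at_def states_def)

lemma state_step_phase: "state_step L x y \<Longrightarrow> fst y = Suc (fst x) mod L"
  by (cases x rule: prod_cases4; cases y rule: prod_cases4) auto

lemma state_step_not_both_Wait:
  "state_step L x y \<Longrightarrow> state_action x \<noteq> Wait \<or> state_action y \<noteq> Wait"
  by (cases x rule: prod_cases4; cases y rule: prod_cases4) auto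

lemma state_step_Proc_Proc:
  "state_step L x y \<Longrightarrow> state_action x = Proc a \<Longrightarrow> state_action y = Proc b \<Longrightarrow> a \<noteq> b"
  by (cases x rule: prod_cases4; cases y rule: prod_cases4) (auto split: if_splits)

lemma state_step_Proc_Wait_Proc:
  "state_step L x y \<Longrightarrow> state_step L y z \<Longrightarrow>
    state_action x = Proc a \<Longrightarrow> state_action y = Wait \<Longrightarrow> state_action z = Proc b \<Longrightarrow> a \<noteq> b"
  by (cases x rule: prod_cases4; cases y rule: prod_cases4; cases z rule: prod_cases4) (auto split: if_splits)

lemma state_at_eq_if_state_steps:
  assumes "state_step L x y" "state_step L y z" "fst z = t mod L"
    and "\<sigma> (t - 2) = state_action x" "\<sigma> (t - 1) = state_action y" "\<sigma> t = state_action z"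
  shows "state_at L \<sigma> t = z"
  using assms
  by (cases x rule: prod_cases4; cases y rule: prod_cases4; cases z rule: prod_cases4)
    (auto simp: state_at_def split: if_splits)

section \<open>Schedules from closed walks\<close>

text \<open>Plays \<open>cs\<close> cyclically, shifted so that period \<open>t\<close> is played by an entry of phase \<open>t mod L\<close>
  when \<open>cs\<close> is a closed walk of \<open>state_step L\<close>.\<close>
definition cycle_schedule :: "lock_state list \<Rightarrow> schedule" where
  "cycle_schedule cs t = state_action (cs ! ((t + (length cs - fst (cs ! 0))) mod length cs))"

locale state_cycle =
  fixes L :: nat and cs :: "lock_state list"
  assumes L_pos: "0 < L" and closed: "closed_walk (state_step L) (states L) cs"
begin

definition idx :: "nat \<Rightarrow> nat" where
  "idx t = (t + (length cs - fst (cs ! 0))) mod length cs"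

lemma length_pos: "0 < length cs"
  using closed by (simp add: closed_walk_def)

lemma phase_lt: "i < length cs \<Longrightarrow> fst (cs ! i) < L"
  using closed by (auto simp: closed_walk_def states_def dest!: nth_mem)

lemma step_mod: "state_step L (cs ! (i mod length cs)) (cs ! (Suc i mod length cs))"
proof -
  have "state_step L (cs ! (i mod length cs)) (cs ! (Suc (i mod length cs) mod length cs))"
    using closed length_pos by (simp add: closed_walk_def)
  then show ?thesis by (simp add: mod_Suc_eq)
qed

lemma phase_mod: "fst (cs ! (i mod length cs)) = (fst (cs ! 0) + i) mod L"
proof (induction i)
  case 0
  then show ?case using phase_lt[of 0] length_pos by simp
next
  case (Suc i)
  then show ?case using state_step_phase[OF step_mod[of i]] by (simp add: mod_Suc_eq)
qed

lemma L_dvd_length: "L dvd length cs"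
proof -
  have "(fst (cs ! 0) + length cs) mod L = fst (cs ! 0) mod L"
    using phase_mod[of "length cs"] phase_lt[of 0] length_pos by simp
  then show ?thesis by (simp add: mod_eq_dvd_iff_nat)
qed

lemma phase_le_length: "fst (cs ! 0) \<le> length cs"
  using phase_lt[of 0] length_pos dvd_imp_le[OF L_dvd_length] by simp

lemma phase_idx: "fst (cs ! idx t) = t mod L"
proof -
  have "fst (cs ! idx t) = (t + length cs) mod L"
    using phase_mod[of "t + (length cs - fst (cs ! 0))"] phase_le_length by (simp add: idx_def)
  then show ?thesis using L_dvd_length by (metis dvd_eq_mod_eq_0 mod_add_right_eq add_0_right)
qed

lemma step_idx: "state_step L (cs ! idx t) (cs ! idx (Suc t))"
  using step_mod[of "t + (length cs - fst (cs ! 0))"] by (simp add: idx_def)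

lemma idx_add_length: "idx (t + length cs) = idx t"
proof -
  have "t + length cs + (length cs - fst (cs ! 0)) = (t + (length cs - fst (cs ! 0))) + length cs"
    by simp
  then show ?thesis unfolding idx_def by (metis mod_add_self2)
qed

lemma cycle_schedule_idx: "cycle_schedule cs t = state_action (cs ! idx t)"
  by (simp add: cycle_schedule_def idx_def)

lemma feasible_cycle_schedule: "feasible (cycle_schedule cs)"
  by (rule feasible_if_alternating_locally)
    (use step_idx state_step_not_both_Wait state_step_Proc_Proc state_step_Proc_Wait_Proc
      in \<open>simp_all add: cycle_schedule_idx, blast+\<close>)

lemma periodic_cycle_schedule: "periodic_with (cycle_schedule cs) (length cs)"
  by (simp add: periodic_with_def cycle_schedule_idx idx_add_length)

lemma state_at_cycle_schedule:
  assumes "2 \<le> t"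
  shows "state_at L (cycle_schedule cs) t = cs ! idx t"
proof -
  have "t = Suc (Suc (t - 2))" using assms by simp
  then obtain u where t: "t = Suc (Suc u)" by blast
  show ?thesis
    unfolding t by (rule state_at_eq_if_state_steps[OF step_idx step_idx]) (simp_all add: phase_idx cycle_schedule_idx)
qed

lemma has_avg_cost_cycle_schedule:
  assumes L: "L = Lambda S"
  shows "has_avg_cost S (cycle_schedule cs) (mean_weight (\<lambda>x. real (state_cost S x)) cs)"
proof -
  let ?\<sigma> = "cycle_schedule cs" and ?m = "length cs"
  define f where "f t = real (cost S ?\<sigma> t)" for t
  have f: "f t = real (state_cost S (cs ! idx t))" if "4 \<le> t" for t
  proof -
    have "no_double_wait ?\<sigma> (t - 3) t"
      using state_step_not_both_Wait[OF step_idx] by (simp add: no_double_wait_def cycle_schedule_idx)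
    then show ?thesis
      using cost_eq_state_cost[OF _ feasible_cycle_schedule that] state_at_cycle_schedule[of t] L_pos L that
      by (simp add: f_def)
  qed
  define t\<^sub>0 where "t\<^sub>0 = 4 * ?m + fst (cs ! 0)"
  have t\<^sub>0: "4 \<le> t\<^sub>0" using length_pos unfolding t\<^sub>0_def by linarith
  have "(\<lambda>T. (\<Sum>t=1..T. f t) / real T) \<longlonglongrightarrow> (\<Sum>t\<in>{t\<^sub>0..<t\<^sub>0 + ?m}. f t) / real ?m"
    using t\<^sub>0 by (intro cesaro_eventually_periodic length_pos) (simp add: f idx_add_length)
  moreover have "(\<Sum>t\<in>{t\<^sub>0..<t\<^sub>0 + ?m}. f t) = (\<Sum>x\<leftarrow>cs. real (state_cost S x))"
  proof -
    have "(\<Sum>t\<in>{t\<^sub>0..<t\<^sub>0 + ?m}. f t) = (\<Sum>i<?m. f (t\<^sub>0 + i))"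
      using sum.shift_bounds_nat_ivl[of f 0 t\<^sub>0 ?m] by (simp add: atLeast0LessThan add.commute)
    also have "\<dots> = (\<Sum>i<?m. real (state_cost S (cs ! i)))"
    proof (rule sum.cong[OF refl])
      fix i assume "i \<in> {..<?m}"
      moreover have "idx (t\<^sub>0 + i) = (i + 5 * ?m) mod ?m"
        using phase_le_length by (simp add: idx_def t\<^sub>0_def algebra_simps)
      ultimately show "f (t\<^sub>0 + i) = real (state_cost S (cs ! i))" using f[of "t\<^sub>0 + i"] t\<^sub>0 by simp
    qed
    finally show ?thesis by (simp add: sum_list_sum_nth atLeast0LessThan)
  qed
  ultimately show ?thesis
    unfolding has_avg_cost_def avg_cost_seq_def[abs_def] mean_weight_def f_def by simp
qed

end

section \<open>Optimality of a minimum mean cycle\<close>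

lemma sum_cost_ge_if_no_double_wait:
  fixes c :: real
  assumes L: "0 < Lambda S" and F: "feasible \<sigma>" and nw: "no_double_wait \<sigma> 1 T" and c: "0 \<le> c"
    and cycles: "\<And>cs. closed_walk (state_step (Lambda S)) (states (Lambda S)) cs \<Longrightarrow>
      length cs \<le> 8 * Lambda S \<Longrightarrow> c * length cs \<le> (\<Sum>x\<leftarrow>cs. real (state_cost S x))"
  shows "c * (real T - 3 - 8 * Lambda S) \<le> (\<Sum>t=1..T. real (cost S \<sigma> t))"
proof -
  let ?L = "Lambda S" and ?n = "T - 3"
  define w where "w i = state_at ?L \<sigma> (i + 4)" for i
  have walk: "walk (state_step ?L) (states ?L) ?n w"
    unfolding walk_def
  proof (intro conjI allI impI)
    show "w i \<in> states ?L" for i using L by (simp add: w_def state_at_in_states)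
    fix i assume "Suc i < ?n"
    then have "no_double_wait \<sigma> (i + 4 - 1) (Suc (i + 4))"
      by (intro no_double_wait_mono[OF nw]) simp_all
    from state_step_state_at[OF F _ this, of ?L] show "state_step ?L (w i) (w (Suc i))"
      by (simp add: w_def)
  qed
  have "c * (real ?n - real (8 * ?L)) \<le> (\<Sum>i<?n. real (state_cost S (w i)))"
    using walk_weight_ge[where N = "8 * ?L", OF finite_states _ _ c cycles walk] by (simp add: card_states)
  also have "\<dots> = (\<Sum>i<?n. real (cost S \<sigma> (i + 4)))"
  proof (rule sum.cong[OF refl])
    fix i assume "i \<in> {..<?n}"
    then have "no_double_wait \<sigma> (i + 4 - 3) (i + 4)"
      by (intro no_double_wait_mono[OF nw]) simp_all
    then show "real (state_cost S (w i)) = real (cost S \<sigma> (i + 4))"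
      using cost_eq_state_cost[OF L F] by (simp add: w_def)
  qed
  also have "\<dots> = (\<Sum>t\<in>{4..<?n + 4}. real (cost S \<sigma> t))"
    using sum.shift_bounds_nat_ivl[of "\<lambda>t. real (cost S \<sigma> t)" 0 4 ?n] by (simp add: atLeast0LessThan)
  also have "\<dots> \<le> (\<Sum>t=1..T. real (cost S \<sigma> t))"
    by (rule sum_mono2) auto
  finally have sum_ge: "c * (real ?n - real (8 * ?L)) \<le> (\<Sum>t=1..T. real (cost S \<sigma> t))" .
  have "c * (real T - 3 - 8 * ?L) \<le> c * (real ?n - real (8 * ?L))"
    by (rule mult_left_mono[OF _ c]) (cases "3 \<le> T"; simp add: of_nat_diff)
  then show ?thesis using sum_ge by linarith
qed

lemma sum_cost_ge:
  fixes c :: real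
  assumes L: "0 < Lambda S" and F: "feasible \<sigma>" and c: "0 \<le> c"
    and cycles: "\<And>cs. closed_walk (state_step (Lambda S)) (states (Lambda S)) cs \<Longrightarrow>
      length cs \<le> 8 * Lambda S \<Longrightarrow> c * length cs \<le> (\<Sum>x\<leftarrow>cs. real (state_cost S x))"
  shows "c * (real T - 3 - 8 * Lambda S) \<le> (\<Sum>t=1..T. real (cost S \<sigma> t))"
proof -
  obtain \<sigma>' where \<sigma>': "feasible \<sigma>'" "dominates \<sigma>' \<sigma>" "no_double_wait \<sigma>' 1 T"
    using exists_dominating_no_double_wait[OF F] by blast
  have "c * (real T - 3 - 8 * Lambda S) \<le> (\<Sum>t=1..T. real (cost S \<sigma>' t))"
    by (rule sum_cost_ge_if_no_double_wait[OF L \<sigma>'(1,3) c cycles])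
  also have "\<dots> \<le> (\<Sum>t=1..T. real (cost S \<sigma> t))"
    using cost_le_if_dominates[OF \<sigma>'(2)] by (intro sum_mono) simp
  finally show ?thesis .
qed

lemma avg_cost_ge:
  fixes c :: real
  assumes L: "0 < Lambda S" and F: "feasible \<sigma>" and c: "0 \<le> c" and avg: "has_avg_cost S \<sigma> c'"
    and cycles: "\<And>cs. closed_walk (state_step (Lambda S)) (states (Lambda S)) cs \<Longrightarrow>
      length cs \<le> 8 * Lambda S \<Longrightarrow> c * length cs \<le> (\<Sum>x\<leftarrow>cs. real (state_cost S x))"
  shows "c \<le> c'"
proof (rule average_limit_ge)
  show "(\<lambda>T. (\<Sum>t=1..T. real (cost S \<sigma> t)) / real T) \<longlonglongrightarrow> c'"
    using avg by (simp add: has_avg_cost_def avg_cost_seq_def[abs_def])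
  show "c * (real T - (3 + 8 * Lambda S)) \<le> (\<Sum>t=1..T. real (cost S \<sigma> t))" for T
    using sum_cost_ge[OF L F c cycles, of T] by (simp add: algebra_simps)
qed

lemma alternating_closed_walk:
  assumes "0 < L"
  shows "closed_walk (state_step L) (states L)
    (map (\<lambda>i. (i mod L, if even i then Down else Upstr, False, False)) [0..<2 * L])"
  unfolding closed_walk_def
proof (intro conjI allI impI)
  let ?cs = "map (\<lambda>i. (i mod L, if even i then Down else Upstr, False, False)) [0..<2 * L]"
  show "?cs \<noteq> []" "set ?cs \<subseteq> states L" using assms by (auto simp: states_def)
  fix i assume "i < length ?cs"
  then have i: "i < 2 * L" by simp
  have "Suc i = 2 * L \<Longrightarrow> odd i" by (metis dvd_triv_left even_Suc)
  then have "even (Suc i mod (2 * L)) \<longleftrightarrow> odd i"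
    using i by (cases "Suc i = 2 * L") auto
  moreover have "Suc i mod (2 * L) mod L = Suc (i mod L) mod L"
    by (simp add: mod_mod_cancel mod_Suc_eq)
  moreover have "Suc i mod (2 * L) < 2 * L" using assms by simp
  ultimately show "state_step L (?cs ! i) (?cs ! (Suc i mod length ?cs))"
    using i by auto
qed

theorem lemma6:
  fixes S :: "stream list"
  assumes "\<forall>s\<in>set S. valid_stream s"
  shows "\<exists>\<sigma> P. optimal S \<sigma> \<and> 1 \<le> P \<and> P \<le> 8 * Lambda S \<and> periodic_with \<sigma> P"
proof -
  let ?L = "Lambda S" and ?g = "\<lambda>x. real (state_cost S x)"
  have L: "0 < ?L" using Lambda_pos[OF assms] .
  have "length (map (\<lambda>i. (i mod ?L, if even i then Down else Upstr, False, False)) [0..<2 * ?L]) \<le> 8 * ?L"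
    by simp
  then obtain cs where cs: "closed_walk (state_step ?L) (states ?L) cs" "length cs \<le> 8 * ?L"
    and min: "\<And>cs'. closed_walk (state_step ?L) (states ?L) cs' \<Longrightarrow> length cs' \<le> 8 * ?L \<Longrightarrow>
      mean_weight ?g cs * length cs' \<le> (\<Sum>x\<leftarrow>cs'. ?g x)"
    by (rule exists_min_mean_closed_walk[OF finite_states alternating_closed_walk[OF L], where g = ?g]) blast
  interpret state_cycle ?L cs using L cs(1) by unfold_locales
  have "mean_weight ?g cs \<le> c'" if "feasible \<sigma>'" "has_avg_cost S \<sigma>' c'" for \<sigma>' c'
    by (rule avg_cost_ge[OF L that(1) _ that(2) min]) (simp add: mean_weight_nonneg)
  then have "optimal S (cycle_schedule cs)"
    unfolding optimal_def using feasible_cycle_schedule has_avg_cost_cycle_schedule[OF refl] by blast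
  then show ?thesis
    using periodic_cycle_schedule length_pos cs(2)
    by (intro exI[of _ "cycle_schedule cs"] exI[of _ "length cs"]) (simp add: Suc_le_eq)
qed

end
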